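(* Let $F$ be the elementary cellular automaton with rule number 78. For every nonempty finite word $u\in\{0,1\}^*$, the deterministic communication complexity of $\textsc{SInv}_{F,u}$ restricted to inputs of length $n$ is bounded by a constant independent of $n$.
   Context: An elementary cellular automaton (ECA) with rule number $N\in\{0,\dots,255\}$ is the map $F:\{0,1\}^{\mathbb Z}\to\{0,1\}^{\mathbb Z}$ given by $F(x)_i=f(x_{i-1},x_i,x_{i+1})$. Here the local rule $f:\{0,1\}^3\to\{0,1\}$ is determined by $N=\sum_{a,b,c\in\{0,1\}}2^{4a+2b+c}f(a,b,c)$. For a nonempty finite word $u$, $p_u\in\{0,1\}^{\mathbb Z}$ is defined by $(p_u)_i=u_{i\bmod |u|}$. For a finite word $x$, $p_u[x]$ is the configuration equal to $x$ on positions $0,\dots,|x|-1$ and to $p_u$ elsewhere. $\textsc{SInv}_{F,u}$ is the decision problem: on input a finite word $x$, decide whether there is an integer $w$ such that for all $t\ge0$ the set of positions where $F^t(p_u)$ and $F^t(p_u[x])$ differ is contained in an interval of length $w$. For each $n$, it is regarded as a function $\{0,1\}^n\to\{0,1\}$. For a function $g:X\times Y\to Z$, $D(g)$ is the minimal depth of a deterministic two-party protocol computing $g$. In such a protocol, Alice knows $x$ and Bob knows $y$. The protocol is a binary tree: each internal node is labelled by a function of Alice's input only or of Bob's input only, with values in $\{\text{left},\text{right}\}$, and each leaf is labelled by an output value. For $g:\{0,1\}^m\to Z$, set $D(g)=\max_{0\le i<m}D(g_i)$, where $g_i:\{0,1\}^i\times\{0,1\}^{m-i}\to Z$ is $g_i(x,y)=g(xy)$.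 *)

theory Defs
  imports Main
begin

type_synonym config = "int \<Rightarrow> bool"

definition eca_local :: "nat \<Rightarrow> bool \<Rightarrow> bool \<Rightarrow> bool \<Rightarrow> bool" where
  "eca_local N a b c = bit N (4 * of_bool a + 2 * of_bool b + of_bool c)"

definition eca :: "nat \<Rightarrow> config \<Rightarrow> config" where
  "eca N x = (\<lambda>i. eca_local N (x (i - 1)) (x i) (x (i + 1)))"

definition periodic :: "bool list \<Rightarrow> config" where
  "periodic u = (\<lambda>i. u ! nat (i mod int (length u)))"

definition patch :: "bool list \<Rightarrow> bool list \<Rightarrow> config" where
  "patch u x = (\<lambda>i. if 0 \<le> i \<and> i < int (length x) then x ! nat i else periodic u i)"

definition SInv :: "nat \<Rightarrow> bool list \<Rightarrow> bool list \<Rightarrow> bool" where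
  "SInv N u x = (\<exists>w::int. \<forall>t::nat. \<exists>a::int.
      {i. (eca N ^^ t) (periodic u) i \<noteq> (eca N ^^ t) (patch u x) i} \<subseteq> {a..a + w})"

datatype ('a, 'b, 'o) protocol =
    Leaf 'o
  | ANode "'a \<Rightarrow> bool" "('a, 'b, 'o) protocol" "('a, 'b, 'o) protocol"
  | BNode "'b \<Rightarrow> bool" "('a, 'b, 'o) protocol" "('a, 'b, 'o) protocol"

fun run :: "('a, 'b, 'o) protocol \<Rightarrow> 'a \<Rightarrow> 'b \<Rightarrow> 'o" where
  "run (Leaf z) x y = z"
| "run (ANode f l r) x y = (if f x then run l x y else run r x y)"
| "run (BNode f l r) x y = (if f y then run l x y else run r x y)"

fun depth :: "('a, 'b, 'o) protocol \<Rightarrow> nat" where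
  "depth (Leaf z) = 0"
| "depth (ANode f l r) = Suc (max (depth l) (depth r))"
| "depth (BNode f l r) = Suc (max (depth l) (depth r))"

definition computes :: "('a, 'b, 'o) protocol \<Rightarrow> ('a \<Rightarrow> 'b \<Rightarrow> 'o) \<Rightarrow> 'a set \<Rightarrow> 'b set \<Rightarrow> bool" where
  "computes P g X Y = (\<forall>x\<in>X. \<forall>y\<in>Y. run P x y = g x y)"

definition Dcc :: "('a \<Rightarrow> 'b \<Rightarrow> 'o) \<Rightarrow> 'a set \<Rightarrow> 'b set \<Rightarrow> nat" where
  "Dcc g X Y = (LEAST d. \<exists>P :: ('a, 'b, 'o) protocol. depth P = d \<and> computes P g X Y)"

definition Dword :: "(bool list \<Rightarrow> 'o) \<Rightarrow> nat \<Rightarrow> nat" where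
  "Dword g m = Max (insert 0 ((\<lambda>i. Dcc (\<lambda>x y. g (x @ y))
        {x. length x = i} {y. length y = m - i}) ` {..<m}))"

end

theory Submission
  imports Defs
begin

text \<open>
  Rule 78 reads f(a,b,c) = (if a then b \<and> \<not>c else b \<or> c). Two phenomena decide SInv:

  Walls: a pattern 10 at positions i, i+1 is reproduced forever, and it separates the
  dynamics: left of the wall cell i+1 only the cells up to i+1 matter, right of cell i
  only the cells from i on. If u is not constant, p_u has walls arbitrarily far to the
  left and right of x, so the perturbation stays trapped between two walls and SInv holds
  for every x.

  Constant background: on 0^Z the leftmost 1 of a finite perturbation moves one step to
  the left per time step while the rightmost 1 is a wall and stays put, so the perturbation
  grows without bound; on 1^Z one step yields a finite perturbation of 0^Z. Hence for
  constant u = c^k, SInv holds exactly when x = c^|x|.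

  In both cases SInv(xy) = A(x) \<and> B(y), which a protocol of depth 2 computes.
\<close>

abbreviation F78 :: "config \<Rightarrow> config" where "F78 \<equiv> eca 78"

lemma F78_eq: "F78 c i = (if c (i - 1) then c i \<and> \<not> c (i + 1) else c i \<or> c (i + 1))"
  by (cases "c (i - 1)"; cases "c i"; cases "c (i + 1)")
     (simp_all add: eca_def eca_local_def bit_nat_def)

lemma change_point:
  fixes P :: "int \<Rightarrow> bool"
  assumes "P i" "\<not> P j" "i \<le> j"
  shows "\<exists>k. i \<le> k \<and> k < j \<and> P k \<and> \<not> P (k + 1)"
  using \<open>i \<le> j\<close> \<open>\<not> P j\<close>
proof (induction j rule: int_ge_induct)
  case base
  then show ?case using \<open>P i\<close> by simp
next
  case (step j)
  then show ?case by (cases "P j") force+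
qed

section \<open>Walls\<close>

definition wall :: "config \<Rightarrow> int \<Rightarrow> bool" where
  "wall c i \<longleftrightarrow> c i \<and> \<not> c (i + 1)"

lemma wall_step: "wall c i \<Longrightarrow> wall (F78 c) i"
  by (simp add: wall_def F78_eq)

lemma wall_iter: "wall c i \<Longrightarrow> wall ((F78 ^^ t) c) i"
  by (induction t) (simp_all add: wall_step)

lemma wall_left_step:
  assumes "wall c i" and agree: "\<forall>j\<le>i + 1. c j = d j"
  shows "\<forall>j\<le>i + 1. F78 c j = F78 d j"
proof (intro allI impI)
  fix j assume j: "j \<le> i + 1"
  have "wall d i" using assms by (simp add: wall_def)
  show "F78 c j = F78 d j"
  proof (cases "j = i + 1")
    case True
    then show ?thesis using wall_step[OF \<open>wall c i\<close>] wall_step[OF \<open>wall d i\<close>]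
      by (simp add: wall_def)
  next
    case False
    then show ?thesis using j agree by (simp add: F78_eq)
  qed
qed

lemma wall_right_step:
  assumes "wall c i" and agree: "\<forall>j\<ge>i. c j = d j"
  shows "\<forall>j\<ge>i. F78 c j = F78 d j"
proof (intro allI impI)
  fix j assume j: "i \<le> j"
  have "wall d i" using assms by (simp add: wall_def)
  show "F78 c j = F78 d j"
  proof (cases "j = i")
    case True
    then show ?thesis using wall_step[OF \<open>wall c i\<close>] wall_step[OF \<open>wall d i\<close>]
      by (simp add: wall_def)
  next
    case False
    then show ?thesis using j agree by (simp add: F78_eq)
  qed
qed

lemma wall_left_iter:
  assumes "wall c i" "\<forall>j\<le>i + 1. c j = d j"
  shows "\<forall>j\<le>i + 1. (F78 ^^ t) c j = (F78 ^^ t) d j"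
proof (induction t)
  case (Suc t)
  then show ?case using wall_left_step[OF wall_iter[OF assms(1)]] by simp
qed (simp add: assms(2))

lemma wall_right_iter:
  assumes "wall c i" "\<forall>j\<ge>i. c j = d j"
  shows "\<forall>j\<ge>i. (F78 ^^ t) c j = (F78 ^^ t) d j"
proof (induction t)
  case (Suc t)
  then show ?case using wall_right_step[OF wall_iter[OF assms(1)]] by simp
qed (simp add: assms(2))

definition bounded_diff :: "config \<Rightarrow> config \<Rightarrow> bool" where
  "bounded_diff c d \<longleftrightarrow>
     (\<exists>w::int. \<forall>t::nat. \<exists>a::int. {i. (F78 ^^ t) c i \<noteq> (F78 ^^ t) d i} \<subseteq> {a..a + w})"

lemma SInv_78: "SInv 78 u x = bounded_diff (periodic u) (patch u x)"
  by (simp add: SInv_def bounded_diff_def)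

lemma bounded_diff_step: "bounded_diff c d \<Longrightarrow> bounded_diff (F78 c) (F78 d)"
proof -
  assume "bounded_diff c d"
  then obtain w where W: "\<forall>t. \<exists>a. {i. (F78 ^^ t) c i \<noteq> (F78 ^^ t) d i} \<subseteq> {a..a + w}"
    unfolding bounded_diff_def by blast
  have "\<exists>a. {i. (F78 ^^ t) (F78 c) i \<noteq> (F78 ^^ t) (F78 d) i} \<subseteq> {a..a + w}" for t
    using W[rule_format, of "Suc t"] by (simp only: funpow_Suc_right comp_apply)
  then show ?thesis unfolding bounded_diff_def by blast
qed

lemma bounded_diff_between_walls:
  assumes "wall c i" "wall c j"
    and "\<forall>l\<le>i + 1. c l = d l" "\<forall>l\<ge>j. c l = d l"
  shows "bounded_diff c d"
  unfolding bounded_diff_def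
proof (intro exI allI)
  fix t
  have left: "\<forall>l\<le>i + 1. (F78 ^^ t) c l = (F78 ^^ t) d l"
    using wall_left_iter[OF assms(1,3)] .
  have right: "\<forall>l\<ge>j. (F78 ^^ t) c l = (F78 ^^ t) d l"
    using wall_right_iter[OF assms(2,4)] .
  show "{l. (F78 ^^ t) c l \<noteq> (F78 ^^ t) d l} \<subseteq> {i..i + (j - i)}"
  proof (intro subsetI)
    fix l assume "l \<in> {l. (F78 ^^ t) c l \<noteq> (F78 ^^ t) d l}"
    with left right have "\<not> l \<le> i + 1" "\<not> j \<le> l" by blast+
    then show "l \<in> {i..i + (j - i)}" by simp
  qed
qed

section \<open>Spreading over the zero background\<close>

lemma F78_zero_iter: "(F78 ^^ t) (\<lambda>_. False) = (\<lambda>_. False)"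
proof -
  have "F78 (\<lambda>_. False) = (\<lambda>_. False)" by (rule ext) (simp add: F78_eq)
  then show ?thesis by (induction t) simp_all
qed

lemma left_front_step:
  assumes "\<forall>l<L. \<not> e l" "e L"
  shows "(\<forall>l<L - 1. \<not> F78 e l) \<and> F78 e (L - 1)"
  using assms by (simp add: F78_eq)

lemma left_front_iter:
  assumes "\<forall>l<L. \<not> e l" "e L"
  shows "(\<forall>l<L - int t. \<not> (F78 ^^ t) e l) \<and> (F78 ^^ t) e (L - int t)"
proof (induction t)
  case 0
  then show ?case using assms by simp
next
  case (Suc t)
  then have "(\<forall>l<L - int t - 1. \<not> F78 ((F78 ^^ t) e) l) \<and> F78 ((F78 ^^ t) e) (L - int t - 1)"
    using left_front_step by blast
  then show ?case by (simp add: algebra_simps)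
qed

text \<open>A finite nonzero perturbation of 0^Z grows without bound: its leftmost 1 escapes
  to the left while its rightmost 1 is a wall.\<close>
lemma unbounded_over_zero:
  assumes fin: "finite {l. e l}" and "e l0"
  shows "\<not> bounded_diff (\<lambda>_. False) e"
proof
  assume "bounded_diff (\<lambda>_. False) e"
  then obtain w where W: "\<forall>t::nat. \<exists>a. {i. (F78 ^^ t) (\<lambda>_. False) i \<noteq> (F78 ^^ t) e i} \<subseteq> {a..a + w}"
    unfolding bounded_diff_def by blast
  define L where "L = Min {l. e l}"
  define R where "R = Max {l. e l}"
  have ne: "{l. e l} \<noteq> {}" using \<open>e l0\<close> by blast
  have "e L" "\<forall>l<L. \<not> e l" using Min_in[OF fin ne] Min_le[OF fin] by (force simp: L_def)+
  moreover have "e R" "\<forall>l>R. \<not> e l" using Max_in[OF fin ne] Max_ge[OF fin] by (force simp: R_def)+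
  ultimately have "L \<le> R" and "wall e R" by (auto simp: wall_def not_less)
  define t where "t = nat w + 1"
  obtain a where a: "{i. (F78 ^^ t) (\<lambda>_. False) i \<noteq> (F78 ^^ t) e i} \<subseteq> {a..a + w}"
    using W by blast
  have "(F78 ^^ t) e (L - int t)" using left_front_iter[OF \<open>\<forall>l<L. \<not> e l\<close> \<open>e L\<close>] by blast
  moreover have "(F78 ^^ t) e R" using wall_iter[OF \<open>wall e R\<close>] by (simp add: wall_def)
  ultimately have "L - int t \<in> {a..a + w}" "R \<in> {a..a + w}" using a by (auto simp: F78_zero_iter)
  then show False using \<open>L \<le> R\<close> by (simp add: t_def)
qed

section \<open>Periodic backgrounds\<close>

lemma periodic_shift: "u \<noteq> [] \<Longrightarrow> periodic u (i + int (length u) * m) = periodic u i"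
  by (simp add: periodic_def)

lemma periodic_nth: "k < length u \<Longrightarrow> periodic u (int k) = u ! k"
  by (simp add: periodic_def)

lemma periodic_const: "u \<noteq> [] \<Longrightarrow> \<forall>a\<in>set u. a = c \<Longrightarrow> periodic u = (\<lambda>_. c)"
proof (rule ext)
  fix i assume "u \<noteq> []" "\<forall>a\<in>set u. a = c"
  moreover have "nat (i mod int (length u)) < length u" using \<open>u \<noteq> []\<close>
    by (simp add: nat_less_iff)
  ultimately show "periodic u i = c" unfolding periodic_def using nth_mem by blast
qed

lemma patch_outside: "j < 0 \<or> int (length x) \<le> j \<Longrightarrow> patch u x j = periodic u j"
  by (auto simp: patch_def)

lemma periodic_wall:
  assumes "u \<noteq> []" "\<not> (\<exists>c. \<forall>a\<in>set u. a = c)"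
  shows "\<exists>i. wall (periodic u) i"
proof -
  obtain a b where ab: "a < length u" "u ! a" "b < length u" "\<not> u ! b"
    using assms(2) by (metis (full_types) in_set_conv_nth)
  let ?j = "int b + int (length u) * 1"
  have "periodic u (int a)" "\<not> periodic u ?j"
    using ab periodic_nth periodic_shift[OF assms(1)] by metis+
  moreover have "int a \<le> ?j" using ab by simp
  ultimately show ?thesis using change_point[of "periodic u"] by (auto simp: wall_def)
qed

text \<open>Over a non-constant periodic background every finite perturbation is trapped
  between two walls.\<close>
lemma SInv_nonconstant:
  assumes "u \<noteq> []" "\<not> (\<exists>c. \<forall>a\<in>set u. a = c)"
  shows "SInv 78 u x"
proof -
  let ?p = "int (length u)"
  obtain i0 where i0: "wall (periodic u) i0" using periodic_wall[OF assms] by blast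
  have wall_shift: "wall (periodic u) (i0 + ?p * m)" for m
    using i0 periodic_shift[OF assms(1), of i0 m] periodic_shift[OF assms(1), of "i0 + 1" m]
    by (simp add: wall_def algebra_simps)
  have p_ge: "m \<le> ?p * m" if "0 \<le> m" for m
    using assms(1) that by (simp add: mult_le_cancel_right1 Suc_le_eq)
  define i where "i = i0 - ?p * (\<bar>i0\<bar> + 2)"
  define j where "j = i0 + ?p * (\<bar>i0\<bar> + int (length x))"
  have "i + 1 < 0" using p_ge[of "\<bar>i0\<bar> + 2"] unfolding i_def by linarith
  then have left: "\<forall>l\<le>i + 1. periodic u l = patch u x l" by (simp add: patch_outside)
  have "int (length x) \<le> j" using p_ge[of "\<bar>i0\<bar> + int (length x)"] by (simp add: j_def)
  then have right: "\<forall>l\<ge>j. periodic u l = patch u x l" by (simp add: patch_outside)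
  have "i = i0 + ?p * (- (\<bar>i0\<bar> + 2))" by (simp add: i_def algebra_simps)
  then have "wall (periodic u) i" "wall (periodic u) j" using wall_shift by (simp_all add: j_def)
  then show ?thesis unfolding SInv_78 using bounded_diff_between_walls[OF _ _ left right] by blast
qed

lemma SInv_constant:
  assumes "u \<noteq> []" "\<forall>a\<in>set u. a = c"
  shows "SInv 78 u x \<longleftrightarrow> (\<forall>a\<in>set x. a = c)"
proof
  have P: "periodic u = (\<lambda>_. c)" using periodic_const[OF assms] .
  assume S: "SInv 78 u x"
  show "\<forall>a\<in>set x. a = c"
  proof (rule ccontr)
    assume "\<not> (\<forall>a\<in>set x. a = c)"
    then obtain k where k: "k < length x" "x ! k \<noteq> c" by (metis in_set_conv_nth)
    have pk: "patch u x (int k) \<noteq> c" using k by (simp add: patch_def)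
    show False
    proof (cases c)
      case False
      have "{l. patch u x l} \<subseteq> {0..<int (length x)}"
        using False P by (auto simp: patch_def split: if_splits)
      then have "finite {l. patch u x l}" by (rule finite_subset) simp
      moreover have "patch u x (int k)" using pk False by simp
      moreover have "bounded_diff (\<lambda>_. False) (patch u x)" using S P False by (simp add: SInv_78)
      ultimately show False using unbounded_over_zero by blast
    next
      case True
      have out: "patch u x l" if "l < 0 \<or> int (length x) \<le> l" for l
        using that True P by (simp add: patch_outside)
      have "{l. F78 (patch u x) l} \<subseteq> {-1..int (length x)}"
      proof
        fix l assume l: "l \<in> {l. F78 (patch u x) l}"
        show "l \<in> {-1..int (length x)}"
        proof (rule ccontr)
          assume "l \<notin> {-1..int (length x)}"
          then have "patch u x (l - 1)" "patch u x l" "patch u x (l + 1)"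
            using out[of "l - 1"] out[of l] out[of "l + 1"] by auto
          then show False using l by (simp add: F78_eq)
        qed
      qed
      then have fin: "finite {l. F78 (patch u x) l}" by (rule finite_subset) simp
      obtain m where m: "\<not> patch u x m" "patch u x (m + 1)"
        using change_point[of "\<lambda>l. \<not> patch u x l" "int k" "int (length x)"] pk True out k
        by auto
      then have "F78 (patch u x) (m + 1)" by (simp add: F78_eq)
      moreover have "F78 (periodic u) = (\<lambda>_. False)"
        using P True by (simp add: F78_eq fun_eq_iff)
      then have "bounded_diff (\<lambda>_. False) (F78 (patch u x))"
        using bounded_diff_step S by (metis SInv_78)
      ultimately show False using unbounded_over_zero[OF fin] by blast
    qed
  qed
next
  assume X: "\<forall>a\<in>set x. a = c"
  have "patch u x i = periodic u i" for i
  proof (cases "0 \<le> i \<and> i < int (length x)")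
    case True
    then have "x ! nat i \<in> set x" by (simp add: nat_less_iff)
    then show ?thesis using True X periodic_const[OF assms] by (simp add: patch_def)
  qed (auto simp: patch_def)
  then have "patch u x = periodic u" by (rule ext)
  then show "SInv 78 u x" by (simp add: SInv_78 bounded_diff_def)
qed

lemma SInv_78_product:
  assumes "u \<noteq> []"
  shows "\<exists>A B. \<forall>x y. SInv 78 u (x @ y) = (A x \<and> B y)"
proof (cases "\<exists>c. \<forall>a\<in>set u. a = c")
  case True
  then obtain c where c: "\<forall>a\<in>set u. a = c" by blast
  have "\<forall>x y. SInv 78 u (x @ y) = ((\<forall>a\<in>set x. a = c) \<and> (\<forall>a\<in>set y. a = c))"
    by (simp add: SInv_constant[OF assms c] ball_Un)
  then show ?thesis by (intro exI)
next
  case False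
  then have "\<forall>x y. SInv 78 u (x @ y) = (True \<and> True)"
    using SInv_nonconstant[OF assms] by simp
  then show ?thesis by (intro exI)
qed

section \<open>Communication complexity\<close>

lemma Dword_product_le_2:
  assumes "\<forall>x y. g (x @ y) = (A x \<and> B y)"
  shows "Dword g n \<le> 2"
proof -
  let ?P = "ANode A (BNode B (Leaf True) (Leaf False)) (Leaf False)
              :: (bool list, bool list, bool) protocol"
  have "Dcc (\<lambda>x y. g (x @ y)) X Y \<le> 2" for X Y
  proof -
    have "depth ?P = 2 \<and> computes ?P (\<lambda>x y. g (x @ y)) X Y"
      using assms by (simp add: computes_def)
    then show ?thesis unfolding Dcc_def by (intro Least_le) blast
  qed
  then show ?thesis by (simp add: Dword_def Max_le_iff)
qed

theorem mainTheorem7: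
  fixes u :: "bool list"
  assumes "u \<noteq> []"
  shows "\<exists>C::nat. \<forall>n::nat. Dword (SInv 78 u) n \<le> C"
proof -
  obtain A B where "\<forall>x y. SInv 78 u (x @ y) = (A x \<and> B y)"
    using SInv_78_product[OF assms] by blast
  then have "Dword (SInv 78 u) n \<le> 2" for n by (rule Dword_product_le_2)
  then show ?thesis by blast
qed

end
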